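(* Let $\{F_1,\ldots,F_m\}$, $m\ge 2$, be a collection of $X$-forests, either all rooted or all unrooted. Let $1\le p\le m$ and let $T_1,\ldots,T_t$ ($t\ge1$) be connected components of $F_p$, with $Y=L(T_1)\cup\cdots\cup L(T_t)$. Suppose that for some $q\neq p$, $1\le q\le m$, there is an edge $e$ of $F_q$ such that, if $T_e^1$ and $T_e^2$ denote the two subtrees created by removing $e$ from $F_q$, we have $L(T_e^1)\subseteq Y$ and $L(T_e^2)\cap Y=\emptyset$. Let $F'_q=F_q\setminus\{e\}$ and $F'_j=F_j$ for $j\neq q$. Then $\{F'_1,\ldots,F'_m\}$ and $\{F_1,\ldots,F_m\}$ have the same collection of maximum agreement forests.
   Context: Let $X$ be a finite label set. An unrooted $X$-forest is a subgraph of a tree whose leaves are labeled bijectively by $X$ and whose unlabeled vertices have degree at least 3, such that each component contains a leaf and the label sets of the components partition $X$. A rooted $X$-forest is defined in the same way, where $X$ contains a distinguished label $\rho$ whose leaf is the root of the underlying tree $T$, and each component is rooted at $\rho$ if it contains it and otherwise at the lowest common ancestor in $T$ of its labeled leaves. Forests are considered up to forced contraction (unlabeled degree-2 vertices other than component roots are suppressed; unlabeled vertices of degree less than 2 are deleted). For a subtree $T'$, $L(T')$ is its set of labels. $\mathrm{Ord}(F)$ is the number of components. $F'$ is a subforest of $F$ if, up to forced contraction, $F'$ is isomorphic (preserving labels, and roots in the rooted case) to $F$ with some edges deleted. An agreement forest for a collection of $X$-forests is an $X$-forest that is a subforest of each of them; a maximum agreement forest is one of minimum order. $F\setminus\{e\}$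 denotes $F$ with edge $e$ deleted. *)

theory Defs
  imports Main
begin

text \<open>Graphs: vertices of an arbitrary type 'v, undirected edges as 2-element vertex sets.\<close>

definition reach :: "'v set set \<Rightarrow> 'v \<Rightarrow> 'v \<Rightarrow> bool" where
  "reach E = (\<lambda>u v. {u, v} \<in> E)\<^sup>*\<^sup>*"

definition deg :: "'v set set \<Rightarrow> 'v \<Rightarrow> nat" where
  "deg E v = card {e \<in> E. v \<in> e}"

definition comps :: "'v set \<Rightarrow> 'v set set \<Rightarrow> 'v set set" where
  "comps W A = {{u \<in> W. reach A w u} | w. w \<in> W}"

record ('v, 'x) xtree =
  tV :: "'v set"
  tE :: "'v set set"
  tlab :: "'x \<Rightarrow> 'v"

text \<open>rt = True: rooted setting with distinguished root label rho (whose leaf is the root);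
  rt = False: unrooted setting (rho is then irrelevant).\<close>
definition is_xtree :: "bool \<Rightarrow> 'x \<Rightarrow> 'x set \<Rightarrow> ('v, 'x) xtree \<Rightarrow> bool" where
  "is_xtree rt rho X T \<longleftrightarrow>
     finite (tV T) \<and> tV T \<noteq> {} \<and>
     (\<forall>e \<in> tE T. \<exists>u v. u \<in> tV T \<and> v \<in> tV T \<and> u \<noteq> v \<and> e = {u, v}) \<and>
     (\<forall>u \<in> tV T. \<forall>v \<in> tV T. reach (tE T) u v) \<and>
     card (tE T) + 1 = card (tV T) \<and>
     inj_on (tlab T) X \<and>
     tlab T ` X = {v \<in> tV T. deg (tE T) v \<le> 1} \<and>
     (\<forall>v \<in> tV T - tlab T ` X. 3 \<le> deg (tE T) v) \<and>
     (rt \<longrightarrow> rho \<in> X)"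

text \<open>An X-forest, represented as a subgraph (W, A) of an X-tree T.\<close>
record ('v, 'x) xfor =
  ftree :: "('v, 'x) xtree"
  fW :: "'v set"
  fA :: "'v set set"

definition is_xforest :: "bool \<Rightarrow> 'x \<Rightarrow> 'x set \<Rightarrow> ('v, 'x) xfor \<Rightarrow> bool" where
  "is_xforest rt rho X F \<longleftrightarrow>
     is_xtree rt rho X (ftree F) \<and>
     fW F \<subseteq> tV (ftree F) \<and> fA F \<subseteq> tE (ftree F) \<and>
     (\<forall>e \<in> fA F. e \<subseteq> fW F) \<and>
     tlab (ftree F) ` X \<subseteq> fW F \<and>
     (\<forall>C \<in> comps (fW F) (fA F). \<exists>x \<in> X. tlab (ftree F) x \<in> C)"

text \<open>Vertex u lies on the (unique) path between a and b in the tree with edges E.\<close>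
definition on_path :: "'v set set \<Rightarrow> 'v \<Rightarrow> 'v \<Rightarrow> 'v \<Rightarrow> bool" where
  "on_path E a b u \<longleftrightarrow> u = a \<or> u = b \<or> \<not> (\<lambda>x y. {x, y} \<in> E \<and> x \<noteq> u \<and> y \<noteq> u)\<^sup>*\<^sup>* a b"

text \<open>Ancestor relation in T rooted at the leaf labelled rho.\<close>
definition anc :: "('v, 'x) xtree \<Rightarrow> 'x \<Rightarrow> 'v \<Rightarrow> 'v \<Rightarrow> bool" where
  "anc T rho u v \<longleftrightarrow> on_path (tE T) (tlab T rho) v u"

definition lca :: "('v, 'x) xtree \<Rightarrow> 'x \<Rightarrow> 'v set \<Rightarrow> 'v" where
  "lca T rho S = (THE u. u \<in> tV T \<and> (\<forall>s \<in> S. anc T rho u s) \<and>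
       (\<forall>w \<in> tV T. (\<forall>s \<in> S. anc T rho w s) \<longrightarrow> anc T rho w u))"

text \<open>Roots of the (labelled) components: the LCA in T of the labelled leaves
  (which is the leaf rho itself for the component containing rho).\<close>
definition croots :: "'x set \<Rightarrow> 'x \<Rightarrow> ('v, 'x) xfor \<Rightarrow> 'v set" where
  "croots X rho F = {lca (ftree F) rho (C \<inter> tlab (ftree F) ` X) | C.
       C \<in> comps (fW F) (fA F) \<and> C \<inter> tlab (ftree F) ` X \<noteq> {}}"

record ('v, 'x) lgraph =
  gV :: "'v set"
  gE :: "'v set set"
  glab :: "'x \<Rightarrow> 'v"
  gR :: "'v set"

definition to_graph :: "bool \<Rightarrow> 'x \<Rightarrow> 'x set \<Rightarrow> ('v, 'x) xfor \<Rightarrow> ('v, 'x) lgraph" where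
  "to_graph rt rho X F = \<lparr>gV = fW F, gE = fA F, glab = tlab (ftree F),
       gR = (if rt then croots X rho F else {})\<rparr>"

inductive fc_step :: "'x set \<Rightarrow> ('v, 'x) lgraph \<Rightarrow> ('v, 'x) lgraph \<Rightarrow> bool" for X where
  del: "v \<in> gV G \<Longrightarrow> v \<notin> glab G ` X \<Longrightarrow> deg (gE G) v < 2 \<Longrightarrow>
        fc_step X G \<lparr>gV = gV G - {v}, gE = {e \<in> gE G. v \<notin> e}, glab = glab G, gR = gR G - {v}\<rparr>"
| sup: "v \<in> gV G \<Longrightarrow> v \<notin> glab G ` X \<Longrightarrow> v \<notin> gR G \<Longrightarrow> a \<noteq> b \<Longrightarrow>
        {u. {v, u} \<in> gE G} = {a, b} \<Longrightarrow>
        fc_step X G \<lparr>gV = gV G - {v}, gE = {e \<in> gE G. v \<notin> e} \<union> {{a, b}}, glab = glab G, gR = gR G\<rparr>"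

definition fully_contracted :: "'x set \<Rightarrow> ('v, 'x) lgraph \<Rightarrow> ('v, 'x) lgraph \<Rightarrow> bool" where
  "fully_contracted X G H \<longleftrightarrow> (fc_step X)\<^sup>*\<^sup>* G H \<and> \<not> (\<exists>H'. fc_step X H H')"

definition lg_iso :: "'x set \<Rightarrow> ('v, 'x) lgraph \<Rightarrow> ('v, 'x) lgraph \<Rightarrow> bool" where
  "lg_iso X G H \<longleftrightarrow> (\<exists>f. bij_betw f (gV G) (gV H) \<and> (\<lambda>e. f ` e) ` gE G = gE H \<and>
       (\<forall>x \<in> X. f (glab G x) = glab H x) \<and> f ` gR G = gR H)"

definition fequiv :: "'x set \<Rightarrow> ('v, 'x) lgraph \<Rightarrow> ('v, 'x) lgraph \<Rightarrow> bool" where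
  "fequiv X G H \<longleftrightarrow> (\<exists>G' H'. fully_contracted X G G' \<and> fully_contracted X H H' \<and> lg_iso X G' H')"

definition del_edges :: "('v, 'x) xfor \<Rightarrow> 'v set set \<Rightarrow> ('v, 'x) xfor" where
  "del_edges F D = F\<lparr>fA := fA F - D\<rparr>"

definition subforest :: "bool \<Rightarrow> 'x \<Rightarrow> 'x set \<Rightarrow> ('v, 'x) xfor \<Rightarrow> ('v, 'x) xfor \<Rightarrow> bool" where
  "subforest rt rho X F' F \<longleftrightarrow>
     (\<exists>D. fequiv X (to_graph rt rho X F') (to_graph rt rho X (del_edges F D)))"

definition forest_ord :: "('v, 'x) xfor \<Rightarrow> nat" where
  "forest_ord F = card (comps (fW F) (fA F))"

definition agreement_forest ::
  "bool \<Rightarrow> 'x \<Rightarrow> 'x set \<Rightarrow> nat \<Rightarrow> (nat \<Rightarrow> ('v, 'x) xfor) \<Rightarrow> ('v, 'x) xfor \<Rightarrow> bool" where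
  "agreement_forest rt rho X m Fs F \<longleftrightarrow>
     is_xforest rt rho X F \<and> (\<forall>i \<in> {1..m}. subforest rt rho X F (Fs i))"

definition max_agreement_forest ::
  "bool \<Rightarrow> 'x \<Rightarrow> 'x set \<Rightarrow> nat \<Rightarrow> (nat \<Rightarrow> ('v, 'x) xfor) \<Rightarrow> ('v, 'x) xfor \<Rightarrow> bool" where
  "max_agreement_forest rt rho X m Fs F \<longleftrightarrow>
     agreement_forest rt rho X m Fs F \<and>
     (\<forall>G. agreement_forest rt rho X m Fs G \<longrightarrow> forest_ord F \<le> forest_ord G)"

definition comp_labels :: "'x set \<Rightarrow> ('v, 'x) xfor \<Rightarrow> 'x set set" where
  "comp_labels X F = {{x \<in> X. tlab (ftree F) x \<in> C} | C. C \<in> comps (fW F) (fA F)}"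

definition side_labels :: "'x set \<Rightarrow> ('v, 'x) xfor \<Rightarrow> 'v set \<Rightarrow> 'v \<Rightarrow> 'x set" where
  "side_labels X F e a = {x \<in> X. reach (fA F - {e}) a (tlab (ftree F) x)}"

end

theory Submission
  imports Defs
begin

text \<open>Every subforest of \<open>F\<^sub>q \ {e}\<close> is a subforest of \<open>F\<^sub>q\<close>, so the two collections have the
  same agreement forests as soon as every agreement forest \<open>F\<close> of the original collection is a
  subforest of \<open>F\<^sub>q \ {e}\<close>. Say \<open>F\<close> arises from \<open>F\<^sub>q \ D\<close> by forced contraction, with \<open>e \<notin> D\<close>.
  The two sides of \<open>e\<close> in \<open>F\<^sub>q \ D\<close> cannot both carry labels: labels on opposite sides are
  connected in \<open>F\<^sub>q \ D\<close>, hence in \<open>F\<close> and in \<open>F\<^sub>p\<close>, so they lie in the same component of \<open>F\<^sub>p\<close>,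
  although the \<open>a\<close>-side lies in \<open>Y\<close> and the \<open>b\<close>-side avoids \<open>Y\<close>. An unlabelled side hangs off the
  rest of the forest by the single edge \<open>e\<close> and is acyclic, so forced contraction erases it
  completely. Hence deleting \<open>e\<close> together with all edges at that side leads to the same
  contracted forest, and \<open>F\<close> is a subforest of \<open>F\<^sub>q \ {e}\<close>. Equal agreement forests give equal
  maximum agreement forests.\<close>

section \<open>Reachability\<close>


lemma reach_refl [simp]: "reach E u u"
  by (simp add: reach_def)

lemma reach_step: "reach E u w \<Longrightarrow> {w, z} \<in> E \<Longrightarrow> reach E u z"
  unfolding reach_def by (rule rtranclp.rtrancl_into_rtrancl)

lemma reach_edge: "{u, w} \<in> E \<Longrightarrow> reach E u w"
  using reach_step[of E u u w] by simp

lemma reach_trans: "reach E u w \<Longrightarrow> reach E w z \<Longrightarrow> reach E u z"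
  unfolding reach_def by (rule rtranclp_trans)

lemma reach_sym: "reach E u w \<Longrightarrow> reach E w u"
proof -
  have "symp (\<lambda>u v. {u, v} \<in> E)" by (auto simp: symp_def insert_commute)
  then show "reach E u w \<Longrightarrow> reach E w u"
    unfolding reach_def by (meson symp_rtranclp sympD)
qed

lemma reach_mono: "reach E u w \<Longrightarrow> E \<subseteq> E' \<Longrightarrow> reach E' u w"
  unfolding reach_def by (erule rtranclp_mono[THEN predicate2D, rotated]) auto

lemma reach_induct [consumes 1, case_names refl step]:
  assumes "reach E u w" "P u" "\<And>y z. reach E u y \<Longrightarrow> {y, z} \<in> E \<Longrightarrow> P y \<Longrightarrow> P z"
  shows "P w"
  using assms(1) unfolding reach_def
proof (induction rule: rtranclp_induct)
  case base show ?case by (rule assms(2))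
next
  case (step y z) then show ?case using assms(3)[of y z] unfolding reach_def by blast
qed

lemma reach_first_edge:
  assumes "reach E v w" "v \<noteq> w"
  obtains z where "{v, z} \<in> E"
  using assms(1) unfolding reach_def
  by (cases rule: converse_rtranclpE) (use assms(2) in auto)

lemma reach_avoid_leaf:
  assumes "reach E u w" "u \<noteq> v" "\<And>y. {v, y} \<in> E \<Longrightarrow> y = z"
  shows "reach {f\<in>E. v \<notin> f} u (if w = v then z else w)"
  using assms(1)
proof (induction rule: reach_induct)
  case refl then show ?case using assms(2) by simp
next
  case (step y x)
  let ?E = "{f\<in>E. v \<notin> f}"
  show ?case
  proof (cases "y = v")
    case True
    then have "x = z" using step(2) assms(3) by simp
    then show ?thesis using step(3) True by (cases "x = v") auto
  next
    case False
    show ?thesis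
    proof (cases "x = v")
      case True
      then have "y = z" using step(2) assms(3) by (simp add: insert_commute)
      then show ?thesis using step(3) False True by simp
    next
      case False2: False
      have "{y, x} \<in> ?E" using step(2) False False2 by simp
      then show ?thesis using reach_step[of ?E u y x] step(3) False False2 by simp
    qed
  qed
qed

lemma reach_suppress:
  assumes "reach E u w" "u \<noteq> v" "{y. {v, y} \<in> E} = {a, b}"
  shows "reach ({f\<in>E. v \<notin> f} \<union> {{a, b}}) u (if w = v then a else w)"
  using assms(1)
proof (induction rule: reach_induct)
  case refl then show ?case using assms(2) by simp
next
  case (step y x)
  let ?E = "{f\<in>E. v \<notin> f} \<union> {{a, b}}"
  have ab: "reach ?E a b" "reach ?E b a"
    by (auto intro: reach_edge simp: insert_commute)
  have nbr: "{v, t} \<in> E \<Longrightarrow> t = a \<or> t = b" for t using assms(3) by blast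
  show ?case
  proof (cases "y = v")
    case True
    then have "reach ?E u a" "x = a \<or> x = b" using step(2,3) nbr by auto
    then show ?thesis using ab(1) reach_trans by fastforce
  next
    case False
    show ?thesis
    proof (cases "x = v")
      case True
      then have "y = a \<or> y = b" using step(2) nbr by (auto simp: insert_commute)
      then show ?thesis using step(3) False True ab(2) reach_trans by fastforce
    next
      case False2: False
      have "{y, x} \<in> ?E" using step(2) False False2 by simp
      then show ?thesis using reach_step[of ?E u y x] step(3) False False2 by simp
    qed
  qed
qed

section \<open>Trees\<close>

definition edges_in :: "'v set \<Rightarrow> 'v set set \<Rightarrow> bool" where
  "edges_in V E \<longleftrightarrow> (\<forall>f\<in>E. \<exists>u w. u \<in> V \<and> w \<in> V \<and> u \<noteq> w \<and> f = {u, w})"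

lemma edges_inE:
  assumes "edges_in V E" "f \<in> E"
  obtains u w where "u \<in> V" "w \<in> V" "u \<noteq> w" "f = {u, w}"
  using assms unfolding edges_in_def by blast

lemma edges_in_Pow: "edges_in V E \<Longrightarrow> E \<subseteq> Pow V"
  by (auto elim!: edges_inE)

lemma edges_in_finite: "finite V \<Longrightarrow> edges_in V E \<Longrightarrow> finite E"
  using edges_in_Pow finite_subset by (metis finite_Pow_iff)

lemma edges_in_edge: "edges_in V E \<Longrightarrow> {u, w} \<in> E \<Longrightarrow> u \<in> V \<and> w \<in> V \<and> u \<noteq> w"
  unfolding edges_in_def by (metis doubleton_eq_iff)

lemma edges_in_incident:
  assumes "edges_in V E" "f \<in> E" "v \<in> f"
  obtains u where "f = {v, u}"
proof -
  obtain a b where "f = {a, b}" using assms(1,2) by (rule edges_inE)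
  then have "f = {v, b} \<or> f = {v, a}" using assms(3) by (auto simp: insert_commute)
  then show thesis using that by blast
qed

lemma edges_in_subset: "edges_in V E \<Longrightarrow> E' \<subseteq> E \<Longrightarrow> edges_in V E'"
  unfolding edges_in_def by (meson subsetD)

lemma edges_in_remove_vertex:
  assumes "edges_in V E"
  shows "edges_in (V - {v}) {f\<in>E. v \<notin> f}"
  unfolding edges_in_def
proof
  fix f assume "f \<in> {f\<in>E. v \<notin> f}"
  then have "f \<in> E" "v \<notin> f" by auto
  obtain u w where "u \<in> V" "w \<in> V" "u \<noteq> w" "f = {u, w}" using assms \<open>f \<in> E\<close> by (rule edges_inE)
  then show "\<exists>u w. u \<in> V - {v} \<and> w \<in> V - {v} \<and> u \<noteq> w \<and> f = {u, w}"
    using \<open>v \<notin> f\<close> by auto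
qed

lemma deg_lt2_unique_neighbour:
  assumes "finite E" "deg E v < 2" "{v, y1} \<in> E" "{v, y2} \<in> E"
  shows "y1 = y2"
proof (rule ccontr)
  assume "y1 \<noteq> y2"
  then have "card {{v, y1}, {v, y2}} = 2" by (simp add: doubleton_eq_iff)
  moreover have "card {{v, y1}, {v, y2}} \<le> deg E v"
    unfolding deg_def using assms(1,3,4) by (intro card_mono) auto
  ultimately show False using assms(2) by simp
qed

lemma sum_deg:
  assumes "finite E" "finite S"
  shows "(\<Sum>v\<in>S. deg E v) = (\<Sum>f\<in>E. card (f \<inter> S))"
proof -
  have "(\<Sum>v\<in>S. deg E v) = (\<Sum>v\<in>S. \<Sum>f\<in>E. if v \<in> f then 1 else 0)"
    unfolding deg_def using sum.inter_filter[OF assms(1), of "\<lambda>_. 1::nat"] by simp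
  also have "\<dots> = (\<Sum>f\<in>E. \<Sum>v\<in>S. if v \<in> f then 1 else 0)"
    by (rule sum.swap)
  also have "\<dots> = (\<Sum>f\<in>E. card (f \<inter> S))"
    using sum.inter_filter[OF assms(2), of "\<lambda>_. 1::nat"] by (simp add: Int_def conj_commute)
  finally show ?thesis .
qed

lemma card_doubleton_Int:
  "u \<noteq> w \<Longrightarrow> card ({u, w} \<inter> S) = (if u \<in> S then 1 else 0) + (if w \<in> S then 1 else 0)"
  by (cases "u \<in> S"; cases "w \<in> S") (auto simp: Int_insert_left)

lemma edges_in_sum_deg:
  assumes "finite V" "edges_in V E"
  shows "(\<Sum>v\<in>V. deg E v) = 2 * card E"
proof -
  have "(\<Sum>v\<in>V. deg E v) = (\<Sum>f\<in>E. card (f \<inter> V))"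
    using assms by (intro sum_deg edges_in_finite)
  also have "\<dots> = (\<Sum>f\<in>E. 2)"
    using assms(2) by (intro sum.cong) (auto elim!: edges_inE simp: card_doubleton_Int)
  finally show ?thesis by simp
qed

definition tree_graph :: "'v set \<Rightarrow> 'v set set \<Rightarrow> bool" where
  "tree_graph V E \<longleftrightarrow> finite V \<and> edges_in V E \<and> (\<forall>u\<in>V. \<forall>w\<in>V. reach E u w) \<and> card E + 1 = card V"

lemma tree_graph_low_deg:
  assumes "tree_graph V E" "V \<noteq> {}"
  obtains v where "v \<in> V" "deg E v < 2"
proof (rule ccontr)
  assume "\<not> thesis"
  then have "\<forall>v\<in>V. 2 \<le> deg E v" using that by (meson not_less)
  then have "(\<Sum>v\<in>V. 2) \<le> (\<Sum>v\<in>V. deg E v)" by (intro sum_mono) simp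
  then show False using assms edges_in_sum_deg[of V E] unfolding tree_graph_def by simp
qed

lemma tree_graph_remove_leaf:
  assumes tree: "tree_graph V E" and v: "v \<in> V" "deg E v < 2" and w: "w \<in> V" "w \<noteq> v"
  obtains z where "{f\<in>E. v \<in> f} = {{v, z}}" "tree_graph (V - {v}) {f\<in>E. v \<notin> f}"
proof -
  have fin: "finite V" "finite E" and edges: "edges_in V E" and conn: "\<forall>u\<in>V. \<forall>w\<in>V. reach E u w"
    and cardE: "card E + 1 = card V"
    using tree edges_in_finite unfolding tree_graph_def by auto
  obtain z where z: "{v, z} \<in> E" using reach_first_edge[of E v w] conn v(1) w by blast
  have z_unique: "\<And>y. {v, y} \<in> E \<Longrightarrow> y = z" using deg_lt2_unique_neighbour[OF fin(2) v(2)] z by blast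
  have inc: "{f\<in>E. v \<in> f} = {{v, z}}"
  proof
    show "{f\<in>E. v \<in> f} \<subseteq> {{v, z}}"
    proof
      fix f assume "f \<in> {f\<in>E. v \<in> f}"
      then have f: "f \<in> E" "v \<in> f" by auto
      obtain y where "f = {v, y}" using edges f by (rule edges_in_incident)
      then show "f \<in> {{v, z}}" using z_unique f(1) by auto
    qed
  qed (use z in auto)
  define E' where "E' = {f\<in>E. v \<notin> f}"
  have Eeq: "E = insert {v, z} E'" "{v, z} \<notin> E'" using inc unfolding E'_def by auto
  have "finite E'" using fin(2) unfolding E'_def by simp
  then have cE: "card E = card E' + 1" using Eeq by (metis card_insert_disjoint Suc_eq_plus1)
  have cV: "card V = card (V - {v}) + 1" using card_Suc_Diff1[OF fin(1) v(1)] by simp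
  have conn': "reach E' u u'" if "u \<in> V - {v}" "u' \<in> V - {v}" for u u'
    using reach_avoid_leaf[of E u u' v z] conn z_unique that unfolding E'_def by auto
  have "tree_graph (V - {v}) E'"
    unfolding tree_graph_def
  proof (intro conjI ballI)
    show "edges_in (V - {v}) E'" unfolding E'_def using edges by (rule edges_in_remove_vertex)
    show "card E' + 1 = card (V - {v})" using cE cV cardE by simp
  qed (use fin(1) conn' in auto)
  with inc show thesis unfolding E'_def by (rule that)
qed

lemma tree_graph_induced_edges_less:
  assumes "tree_graph V E" "S \<subseteq> V" "S \<noteq> {}"
  shows "card {f\<in>E. f \<subseteq> S} < card S"
  using assms
proof (induction "card V" arbitrary: V E S rule: less_induct)
  case less
  have fin: "finite V" "finite E" and edges: "edges_in V E"
    using less.prems(1) edges_in_finite unfolding tree_graph_def by auto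
  have finS: "finite S" using fin(1) less.prems(2) by (rule finite_subset[rotated])
  show ?case
  proof (cases "\<exists>w\<in>V. \<exists>w'\<in>V. w \<noteq> w'")
    case False
    then have "{f\<in>E. f \<subseteq> S} = {}" using less.prems(2) edges by (auto elim: edges_inE)
    moreover have "0 < card S" using finS less.prems(3) by (simp add: card_gt_0_iff)
    ultimately show ?thesis by (metis card.empty)
  next
    case True
    obtain v where v: "v \<in> V" "deg E v < 2"
      using tree_graph_low_deg less.prems(1) True by blast
    obtain w where w: "w \<in> V" "w \<noteq> v" using True by blast
    obtain z where inc: "{f\<in>E. v \<in> f} = {{v, z}}"
      and tree': "tree_graph (V - {v}) {f\<in>E. v \<notin> f}"
      using tree_graph_remove_leaf[OF less.prems(1) v w] by blast
    let ?E' = "{f\<in>E. v \<notin> f}"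
    have smaller: "card (V - {v}) < card V" using fin(1) v(1) by (rule card_Diff1_less)
    have IH: "card {f\<in>?E'. f \<subseteq> S'} < card S'" if "S' \<subseteq> V - {v}" "S' \<noteq> {}" for S'
      using less.hyps[OF smaller tree' that] .
    show ?thesis
    proof (cases "v \<in> S")
      case False
      then have "{f\<in>E. f \<subseteq> S} = {f\<in>?E'. f \<subseteq> S}" by blast
      then show ?thesis using IH[of S] False less.prems(2,3) by auto
    next
      case True
      show ?thesis
      proof (cases "S = {v}")
        case True
        then have "{f\<in>E. f \<subseteq> S} = {}" using edges by (auto elim: edges_inE)
        then show ?thesis using True by simp
      next
        case False
        have "{f\<in>E. f \<subseteq> S} \<subseteq> insert {v, z} {f\<in>?E'. f \<subseteq> S - {v}}" using inc by blast
        then have "card {f\<in>E. f \<subseteq> S} \<le> card (insert {v, z} {f\<in>?E'. f \<subseteq> S - {v}})"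
          using fin(2) by (intro card_mono) auto
        also have "\<dots> \<le> card {f\<in>?E'. f \<subseteq> S - {v}} + 1"
          by (simp add: card_insert_le_m1)
        also have "\<dots> < card (S - {v}) + 1"
          using IH[of "S - {v}"] less.prems(2) True False by auto
        also have "\<dots> = card S" using card_Suc_Diff1[OF finS True] by simp
        finally show ?thesis .
      qed
    qed
  qed
qed

text \<open>Acyclicity of the subgraph induced on \<open>S\<close>, in counting form.\<close>

definition forest_on :: "'v set set \<Rightarrow> 'v set \<Rightarrow> bool" where
  "forest_on E S \<longleftrightarrow> (\<forall>S'\<subseteq>S. S' \<noteq> {} \<longrightarrow> card {f\<in>E. f \<subseteq> S'} < card S')"

lemma forest_onD: "forest_on E S \<Longrightarrow> S' \<subseteq> S \<Longrightarrow> S' \<noteq> {} \<Longrightarrow> card {f\<in>E. f \<subseteq> S'} < card S'"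
  unfolding forest_on_def by blast

lemma forest_on_mono:
  assumes "forest_on E S" "finite E" "E' \<subseteq> E" "S' \<subseteq> S"
  shows "forest_on E' S'"
  unfolding forest_on_def
proof (intro allI impI)
  fix T assume T: "T \<subseteq> S'" "T \<noteq> {}"
  have "card {f\<in>E'. f \<subseteq> T} \<le> card {f\<in>E. f \<subseteq> T}"
    using assms(2,3) by (intro card_mono) auto
  also have "\<dots> < card T" using forest_onD[OF assms(1)] T assms(4) by blast
  finally show "card {f\<in>E'. f \<subseteq> T} < card T" .
qed

lemma tree_graph_forest_on: "tree_graph V E \<Longrightarrow> forest_on E V"
  unfolding forest_on_def using tree_graph_induced_edges_less by blast

section \<open>Forced contraction\<close>

definition wf_graph :: "('v, 'x) lgraph \<Rightarrow> bool" where
  "wf_graph G \<longleftrightarrow> finite (gV G) \<and> edges_in (gV G) (gE G)"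

lemma wf_graph_finite_edges: "wf_graph G \<Longrightarrow> finite (gE G)"
  unfolding wf_graph_def using edges_in_finite by blast

definition del_vertex :: "'v \<Rightarrow> ('v, 'x) lgraph \<Rightarrow> ('v, 'x) lgraph" where
  "del_vertex v G = \<lparr>gV = gV G - {v}, gE = {f \<in> gE G. v \<notin> f}, glab = glab G, gR = gR G - {v}\<rparr>"

definition suppress_vertex :: "'v \<Rightarrow> 'v \<Rightarrow> 'v \<Rightarrow> ('v, 'x) lgraph \<Rightarrow> ('v, 'x) lgraph" where
  "suppress_vertex v a b G =
     \<lparr>gV = gV G - {v}, gE = {f \<in> gE G. v \<notin> f} \<union> {{a, b}}, glab = glab G, gR = gR G\<rparr>"

lemma del_vertex_simps [simp]:
  "gV (del_vertex v G) = gV G - {v}" "gE (del_vertex v G) = {f \<in> gE G. v \<notin> f}"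
  "glab (del_vertex v G) = glab G" "gR (del_vertex v G) = gR G - {v}"
  by (simp_all add: del_vertex_def)

lemma suppress_vertex_simps [simp]:
  "gV (suppress_vertex v a b G) = gV G - {v}"
  "gE (suppress_vertex v a b G) = {f \<in> gE G. v \<notin> f} \<union> {{a, b}}"
  "glab (suppress_vertex v a b G) = glab G" "gR (suppress_vertex v a b G) = gR G"
  by (simp_all add: suppress_vertex_def)

lemma fc_step_del_vertex:
  "v \<in> gV G \<Longrightarrow> v \<notin> glab G ` X \<Longrightarrow> deg (gE G) v < 2 \<Longrightarrow> fc_step X G (del_vertex v G)"
  unfolding del_vertex_def by (rule fc_step.del)

lemma fc_step_suppress_vertex:
  "v \<in> gV G \<Longrightarrow> v \<notin> glab G ` X \<Longrightarrow> v \<notin> gR G \<Longrightarrow> a \<noteq> b \<Longrightarrow> {u. {v, u} \<in> gE G} = {a, b} \<Longrightarrow>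
    fc_step X G (suppress_vertex v a b G)"
  unfolding suppress_vertex_def by (rule fc_step.sup)

lemma fc_stepE [consumes 1, case_names del sup]:
  assumes "fc_step X G G'"
  obtains (del) v where "v \<in> gV G" "v \<notin> glab G ` X" "deg (gE G) v < 2" "G' = del_vertex v G"
  | (sup) v a b where "v \<in> gV G" "v \<notin> glab G ` X" "v \<notin> gR G" "a \<noteq> b"
      "{u. {v, u} \<in> gE G} = {a, b}" "G' = suppress_vertex v a b G"
  using assms by cases (auto simp: del_vertex_def suppress_vertex_def)

lemma suppressed_neighbours:
  assumes "wf_graph G" "{u. {v, u} \<in> gE G} = {a, b}"
  shows "{v, a} \<in> gE G" "{v, b} \<in> gE G" "a \<in> gV G" "b \<in> gV G" "a \<noteq> v" "b \<noteq> v"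
  using assms edges_in_edge[of "gV G" "gE G" v a] edges_in_edge[of "gV G" "gE G" v b]
  unfolding wf_graph_def by blast+

lemma wf_graph_del_vertex: "wf_graph G \<Longrightarrow> wf_graph (del_vertex v G)"
  unfolding wf_graph_def by (simp add: edges_in_remove_vertex)

lemma wf_graph_suppress_vertex:
  assumes "wf_graph G" "{u. {v, u} \<in> gE G} = {a, b}" "a \<noteq> b"
  shows "wf_graph (suppress_vertex v a b G)"
  using assms suppressed_neighbours[OF assms(1,2)] wf_graph_del_vertex[OF assms(1), of v]
  unfolding wf_graph_def edges_in_def by simp blast

lemma fc_step_wf_graph: "fc_step X G G' \<Longrightarrow> wf_graph G \<Longrightarrow> wf_graph G'"
  by (cases rule: fc_stepE) (auto intro: wf_graph_del_vertex wf_graph_suppress_vertex)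

lemma fc_step_reach_iff:
  assumes "fc_step X G G'" "wf_graph G" "u \<in> gV G'" "w \<in> gV G'"
  shows "reach (gE G') u w \<longleftrightarrow> reach (gE G) u w"
  using assms(1)
proof (cases rule: fc_stepE)
  case (del v)
  have uv: "u \<noteq> v" "w \<noteq> v" using assms(3,4) del(4) by auto
  obtain z where z: "\<And>y. {v, y} \<in> gE G \<Longrightarrow> y = z"
    using deg_lt2_unique_neighbour[OF wf_graph_finite_edges[OF assms(2)] del(3)] by blast
  show ?thesis
  proof
    assume "reach (gE G') u w"
    then show "reach (gE G) u w" by (rule reach_mono) (simp add: del(4))
  next
    assume "reach (gE G) u w"
    from reach_avoid_leaf[OF this uv(1) z] show "reach (gE G') u w" using uv(2) del(4) by simp
  qed
next
  case (sup v a b)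
  have uv: "u \<noteq> v" "w \<noteq> v" using assms(3,4) sup(6) by auto
  have nb: "{a, v} \<in> gE G" "{v, b} \<in> gE G"
    using suppressed_neighbours[OF assms(2) sup(5)] by (auto simp: insert_commute)
  have ab: "reach (gE G) a b" using reach_step[OF reach_edge[OF nb(1)] nb(2)] .
  show ?thesis
  proof
    assume "reach (gE G') u w"
    then show "reach (gE G) u w"
    proof (induction rule: reach_induct)
      case (step y z)
      have "{y, z} \<in> gE G \<or> {y, z} = {a, b}" using step(2) sup(6) by auto
      then show ?case
      proof
        assume "{y, z} \<in> gE G"
        with step(3) show ?case by (rule reach_step)
      next
        assume "{y, z} = {a, b}"
        then have "reach (gE G) y z" using ab reach_sym by (auto simp: doubleton_eq_iff)
        with step(3) show ?case by (rule reach_trans)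
      qed
    qed simp
  next
    assume "reach (gE G) u w"
    from reach_suppress[OF this uv(1) sup(5)] show "reach (gE G') u w" using uv(2) sup(6) by simp
  qed
qed

lemma fc_step_invariants:
  assumes "fc_step X G G'" "wf_graph G"
  shows "wf_graph G' \<and> glab G' = glab G \<and> gV G' \<subseteq> gV G \<and> gV G' \<inter> glab G ` X = gV G \<inter> glab G ` X"
  using assms(1) by (cases rule: fc_stepE) (use assms(2) fc_step_wf_graph[OF assms] in auto)

lemma fc_steps_invariants:
  assumes "(fc_step X)\<^sup>*\<^sup>* G H" "wf_graph G"
  shows "wf_graph H \<and> glab H = glab G \<and> gV H \<subseteq> gV G \<and> gV H \<inter> glab G ` X = gV G \<inter> glab G ` X"
  using assms(1)
proof (induction rule: rtranclp_induct)
  case (step y z)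
  then show ?case using fc_step_invariants[OF step(2)] assms(2) by auto
qed (use assms(2) in simp)

lemma fc_steps_reach_iff:
  assumes "(fc_step X)\<^sup>*\<^sup>* G H" "wf_graph G" "u \<in> gV H" "w \<in> gV H"
  shows "reach (gE H) u w \<longleftrightarrow> reach (gE G) u w"
  using assms(1,3,4)
proof (induction rule: rtranclp_induct)
  case (step y z)
  have wf: "wf_graph y" using fc_steps_invariants[OF step(1) assms(2)] by blast
  have "gV z \<subseteq> gV y" using fc_step_invariants[OF step(2) wf] by blast
  then show ?case using step fc_step_reach_iff[OF step(2) wf] by blast
qed simp

lemma lg_iso_reach_iff:
  assumes "wf_graph G" "bij_betw f (gV G) (gV H)" "(\<lambda>e. f ` e) ` gE G = gE H" "u \<in> gV G" "w \<in> gV G"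
  shows "reach (gE H) (f u) (f w) \<longleftrightarrow> reach (gE G) u w"
proof
  assume "reach (gE G) u w"
  then show "reach (gE H) (f u) (f w)"
  proof (induction rule: reach_induct)
    case (step y z)
    have "(\<lambda>e. f ` e) {y, z} \<in> (\<lambda>e. f ` e) ` gE G" using step(2) by (rule imageI)
    then have "{f y, f z} \<in> gE H" using assms(3) by simp
    with step(3) show ?case by (rule reach_step)
  qed simp
next
  have inj: "inj_on f (gV G)" using assms(2) by (simp add: bij_betw_def)
  have edges: "edges_in (gV G) (gE G)" using assms(1) by (simp add: wf_graph_def)
  assume "reach (gE H) (f u) (f w)"
  then have "\<exists>w'\<in>gV G. f w = f w' \<and> reach (gE G) u w'"
  proof (induction rule: reach_induct)
    case refl then show ?case using assms(4) by auto
  next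
    case (step y z)
    obtain w' where w': "w' \<in> gV G" "y = f w'" "reach (gE G) u w'" using step(3) by blast
    have "{y, z} \<in> (\<lambda>e. f ` e) ` gE G" using step(2) assms(3) by simp
    then obtain g where g: "g \<in> gE G" "{y, z} = f ` g" by (rule imageE)
    obtain s t where st: "s \<in> gV G" "t \<in> gV G" "g = {s, t}" using edges g(1) by (rule edges_inE)
    have "{f s, f t} = {y, z}" using g(2) st(3) by simp
    then consider "f s = y" "f t = z" | "f s = z" "f t = y" by (auto simp: doubleton_eq_iff)
    then show ?case
    proof cases
      case 1
      then have "s = w'" using inj st(1) w'(1,2) by (simp add: inj_on_eq_iff)
      then have "reach (gE G) u t" using reach_step[OF w'(3), of t] g(1) st(3) by simp
      then show ?thesis using st(2) 1 by auto
    next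
      case 2
      then have "t = w'" using inj st(2) w'(1,2) by (simp add: inj_on_eq_iff)
      then have "reach (gE G) u s" using reach_step[OF w'(3), of s] g(1) st(3) by (simp add: insert_commute)
      then show ?thesis using st(1) 2 by auto
    qed
  qed
  then obtain w' where "w' \<in> gV G" "f w = f w'" "reach (gE G) u w'" by blast
  moreover have "w' = w" using inj assms(5) calculation(1,2) by (simp add: inj_on_eq_iff)
  ultimately show "reach (gE G) u w" by simp
qed

lemma fequiv_label_reach_iff:
  assumes "fequiv X G H" "wf_graph G" "wf_graph H"
    "glab G ` X \<subseteq> gV G" "glab H ` X \<subseteq> gV H" "x \<in> X" "y \<in> X"
  shows "reach (gE G) (glab G x) (glab G y) \<longleftrightarrow> reach (gE H) (glab H x) (glab H y)"
proof -
  obtain G' H' where fc: "fully_contracted X G G'" "fully_contracted X H H'" and iso: "lg_iso X G' H'"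
    using assms(1) unfolding fequiv_def by blast
  have steps: "(fc_step X)\<^sup>*\<^sup>* G G'" "(fc_step X)\<^sup>*\<^sup>* H H'"
    using fc unfolding fully_contracted_def by blast+
  obtain f where f: "bij_betw f (gV G') (gV H')" "(\<lambda>e. f ` e) ` gE G' = gE H'"
    "\<forall>x\<in>X. f (glab G' x) = glab H' x"
    using iso unfolding lg_iso_def by blast
  note G' = fc_steps_invariants[OF steps(1) assms(2)] and H' = fc_steps_invariants[OF steps(2) assms(3)]
  have inG': "glab G z \<in> gV G'" if "z \<in> X" for z using G' assms(4) that by blast
  have inH': "glab H z \<in> gV H'" if "z \<in> X" for z using H' assms(5) that by blast
  have "reach (gE G) (glab G x) (glab G y) \<longleftrightarrow> reach (gE G') (glab G x) (glab G y)"
    using fc_steps_reach_iff[OF steps(1) assms(2) inG' inG'] assms(6,7) by simp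
  also have "\<dots> \<longleftrightarrow> reach (gE H') (f (glab G x)) (f (glab G y))"
    using lg_iso_reach_iff[OF _ f(1,2) inG' inG'] G' assms(6,7) by simp
  also have "\<dots> \<longleftrightarrow> reach (gE H') (glab H x) (glab H y)"
    using f(3) G' H' assms(6,7) by simp
  also have "\<dots> \<longleftrightarrow> reach (gE H) (glab H x) (glab H y)"
    using fc_steps_reach_iff[OF steps(2) assms(3) inH' inH'] assms(6,7) by simp
  finally show ?thesis .
qed


section \<open>Pendant regions\<close>

definition crosses :: "'v set \<Rightarrow> 'v set \<Rightarrow> bool" where
  "crosses P f \<longleftrightarrow> f \<inter> P \<noteq> {} \<and> \<not> f \<subseteq> P"

text \<open>An unlabelled region \<open>P\<close> that hangs off the rest of \<open>G\<close> by at most one edge and induces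
  a forest. Forced contraction must erase such a region completely.\<close>

definition pendant_region :: "'x set \<Rightarrow> 'v set \<Rightarrow> ('v, 'x) lgraph \<Rightarrow> bool" where
  "pendant_region X P G \<longleftrightarrow> wf_graph G \<and> (\<forall>x\<in>X. glab G x \<notin> P) \<and>
     (\<forall>f\<in>gE G. \<forall>g\<in>gE G. crosses P f \<longrightarrow> crosses P g \<longrightarrow> f = g) \<and> forest_on (gE G) (P \<inter> gV G)"

definition cut_off :: "'v set \<Rightarrow> ('v, 'x) lgraph \<Rightarrow> ('v, 'x) lgraph" where
  "cut_off P G = \<lparr>gV = gV G - P, gE = {f\<in>gE G. f \<inter> P = {}}, glab = glab G, gR = gR G - (P \<inter> gV G)\<rparr>"

lemma cut_off_simps [simp]:
  "gV (cut_off P G) = gV G - P" "gE (cut_off P G) = {f\<in>gE G. f \<inter> P = {}}"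
  "glab (cut_off P G) = glab G" "gR (cut_off P G) = gR G - (P \<inter> gV G)"
  by (simp_all add: cut_off_def)

lemma pendant_regionD:
  assumes "pendant_region X P G"
  shows "wf_graph G" "x \<in> X \<Longrightarrow> glab G x \<notin> P"
    "f \<in> gE G \<Longrightarrow> g \<in> gE G \<Longrightarrow> crosses P f \<Longrightarrow> crosses P g \<Longrightarrow> f = g"
    "forest_on (gE G) (P \<inter> gV G)"
  using assms unfolding pendant_region_def by blast+

lemma pendant_region_del_vertex:
  assumes "pendant_region X P G"
  shows "pendant_region X P (del_vertex v G)"
proof -
  note G = pendant_regionD[OF assms]
  have "forest_on (gE (del_vertex v G)) (P \<inter> gV (del_vertex v G))"
    using G(4) wf_graph_finite_edges[OF G(1)] by (rule forest_on_mono) auto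
  then show ?thesis
    using G wf_graph_del_vertex[OF G(1)] unfolding pendant_region_def by simp
qed

lemma pendant_region_suppressed_edges:
  assumes "pendant_region X P G" "{u. {v, u} \<in> gE G} = {a, b}" "a \<noteq> b"
  shows "\<not> (crosses P {v, a} \<and> crosses P {v, b})"
proof -
  have "{v, a} \<in> gE G" "{v, b} \<in> gE G"
    using suppressed_neighbours[OF pendant_regionD(1)[OF assms(1)] assms(2)] by auto
  moreover have "{v, a} \<noteq> {v, b}" using assms(3) by (simp add: doubleton_eq_iff)
  ultimately show ?thesis using pendant_regionD(3)[OF assms(1)] by blast
qed

text \<open>If \<open>a\<close> and \<open>b\<close> both lie in \<open>P\<close>, so does \<open>v\<close> (otherwise both its edges would cross), and
  the new edge \<open>{a, b}\<close> replaces the two edges at \<open>v\<close>.\<close>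

lemma pendant_region_forest_on_suppress_vertex:
  assumes pend: "pendant_region X P G" and v: "v \<in> gV G" "a \<noteq> b" "{u. {v, u} \<in> gE G} = {a, b}"
  shows "forest_on (gE (suppress_vertex v a b G)) (P \<inter> gV (suppress_vertex v a b G))"
  unfolding forest_on_def
proof (intro allI impI)
  note G = pendant_regionD[OF pend]
  let ?G' = "suppress_vertex v a b G"
  fix S assume S: "S \<subseteq> P \<inter> gV ?G'" "S \<noteq> {}"
  then have S0: "S \<subseteq> P \<inter> gV G" "v \<notin> S" by auto
  have nb: "{v, a} \<in> gE G" "{v, b} \<in> gE G" using suppressed_neighbours[OF G(1) v(3)] by auto
  have finE: "finite (gE G)" using wf_graph_finite_edges[OF G(1)] .
  have finS: "finite S" using S0(1) G(1) finite_subset unfolding wf_graph_def by blast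
  define Old where "Old = {f\<in>gE G. v \<notin> f \<and> f \<subseteq> S}"
  have finOld: "finite Old" using finE unfolding Old_def by simp
  show "card {f\<in>gE ?G'. f \<subseteq> S} < card S"
  proof (cases "{a, b} \<subseteq> S")
    case True
    then have "v \<in> P"
      using pendant_region_suppressed_edges[OF pend v(3,2)] S0(1) unfolding crosses_def by auto
    then have S1: "insert v S \<subseteq> P \<inter> gV G" using S0(1) v(1) by auto
    have "card {f\<in>gE ?G'. f \<subseteq> S} \<le> card (insert {a, b} Old)"
      using finOld unfolding Old_def by (intro card_mono) auto
    also have "\<dots> \<le> card Old + 1" by (simp add: card_insert_le_m1)
    finally have new: "card {f\<in>gE ?G'. f \<subseteq> S} \<le> card Old + 1" .
    have "card Old + 2 = card (insert {v, a} (insert {v, b} Old))"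
      using v(2) finOld unfolding Old_def by (simp add: doubleton_eq_iff)
    also have "\<dots> \<le> card {f\<in>gE G. f \<subseteq> insert v S}"
      using nb True finE unfolding Old_def by (intro card_mono) auto
    also have "\<dots> < card (insert v S)" using forest_onD[OF G(4) S1] by simp
    also have "\<dots> = card S + 1" using finS S0(2) by simp
    finally show ?thesis using new by simp
  next
    case False
    have "card {f\<in>gE ?G'. f \<subseteq> S} \<le> card {f\<in>gE G. f \<subseteq> S}"
      using False finE by (intro card_mono) auto
    also have "\<dots> < card S" using forest_onD[OF G(4) S0(1) S(2)] .
    finally show ?thesis .
  qed
qed

lemma pendant_region_suppress_vertex:
  assumes pend: "pendant_region X P G" and v: "v \<in> gV G" "a \<noteq> b" "{u. {v, u} \<in> gE G} = {a, b}"
  shows "pendant_region X P (suppress_vertex v a b G)"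
proof -
  note G = pendant_regionD[OF pend]
  have nb: "{v, a} \<in> gE G" "{v, b} \<in> gE G" using suppressed_neighbours[OF G(1) v(3)] by auto
  have new_edge: "\<not> crosses P h" if "h \<in> gE G" "v \<notin> h" "crosses P {a, b}" for h
  proof
    assume h: "crosses P h"
    have "crosses P {v, a} \<or> crosses P {v, b}" using that(3) unfolding crosses_def by auto
    then show False using G(3)[OF that(1) nb(1) h] G(3)[OF that(1) nb(2) h] that(2) by auto
  qed
  have "f = g" if "f \<in> gE (suppress_vertex v a b G)" "g \<in> gE (suppress_vertex v a b G)"
    "crosses P f" "crosses P g" for f g
    using that G(3) new_edge by auto
  then show ?thesis
    unfolding pendant_region_def
    using wf_graph_suppress_vertex[OF G(1) v(3,2)] G(2) pendant_region_forest_on_suppress_vertex[OF pend v]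
    by simp
qed

lemma cut_off_del_vertex:
  assumes pend: "pendant_region X P G" and v: "v \<in> gV G" "v \<notin> glab G ` X" "deg (gE G) v < 2"
  shows "cut_off P (del_vertex v G) = cut_off P G \<or> fc_step X (cut_off P G) (cut_off P (del_vertex v G))"
proof (cases "v \<in> P")
  case True
  then have "cut_off P (del_vertex v G) = cut_off P G"
    unfolding cut_off_def using v(1) by auto
  then show ?thesis ..
next
  case False
  have "deg (gE (cut_off P G)) v \<le> deg (gE G) v"
    unfolding deg_def using wf_graph_finite_edges[OF pendant_regionD(1)[OF pend]] by (intro card_mono) auto
  then have "fc_step X (cut_off P G) (del_vertex v (cut_off P G))"
    using v False by (intro fc_step_del_vertex) auto
  moreover have "del_vertex v (cut_off P G) = cut_off P (del_vertex v G)"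
    unfolding cut_off_def del_vertex_def using False by auto
  ultimately show ?thesis by simp
qed

lemma cut_off_suppress_vertex:
  assumes pend: "pendant_region X P G" and v: "v \<in> gV G" "v \<notin> glab G ` X" "v \<notin> gR G" "a \<noteq> b"
    "{u. {v, u} \<in> gE G} = {a, b}"
  shows "cut_off P (suppress_vertex v a b G) = cut_off P G \<or>
    fc_step X (cut_off P G) (cut_off P (suppress_vertex v a b G))"
proof -
  have wf: "wf_graph G" using pendant_regionD(1)[OF pend] .
  have nbr: "u = a \<or> u = b" if "{v, u} \<in> gE G" for u using v(5) that by blast
  have nb: "{v, a} \<in> gE G" "{v, b} \<in> gE G" using suppressed_neighbours[OF wf v(5)] by auto
  have not_both: "\<not> (crosses P {v, a} \<and> crosses P {v, b})"
    using pendant_region_suppressed_edges[OF pend v(5,4)] .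
  consider "v \<in> P" | "v \<notin> P" "a \<notin> P" "b \<notin> P" | c where "v \<notin> P" "{a, b} \<inter> P \<noteq> {}" "c \<in> {a, b} - P"
    using not_both unfolding crosses_def by blast
  then show ?thesis
  proof cases
    case 1
    then have "{a, b} \<inter> P \<noteq> {}" using not_both unfolding crosses_def by auto
    then have "cut_off P (suppress_vertex v a b G) = cut_off P G"
      unfolding cut_off_def suppress_vertex_def using 1 v(1,3) by auto
    then show ?thesis ..
  next
    case 2
    have "{u. {v, u} \<in> gE (cut_off P G)} = {a, b}" using nb nbr 2 by auto
    then have "fc_step X (cut_off P G) (suppress_vertex v a b (cut_off P G))"
      using v 2 by (intro fc_step_suppress_vertex) auto
    moreover have "suppress_vertex v a b (cut_off P G) = cut_off P (suppress_vertex v a b G)"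
      unfolding cut_off_def suppress_vertex_def using 2 by auto
    ultimately show ?thesis by simp
  next
    case 3
    have "{f\<in>gE (cut_off P G). v \<in> f} \<subseteq> {{v, c}}"
    proof
      fix f assume "f \<in> {f\<in>gE (cut_off P G). v \<in> f}"
      then have f: "f \<in> gE G" "f \<inter> P = {}" "v \<in> f" by auto
      obtain u where u: "f = {v, u}" using wf f(1,3) unfolding wf_graph_def by (blast elim: edges_in_incident)
      then have "u \<in> {a, b} - P" using nbr f(1,2) by auto
      then have "u = c" using 3 by auto
      then show "f \<in> {{v, c}}" using u by simp
    qed
    then have "deg (gE (cut_off P G)) v \<le> 1"
      unfolding deg_def using card_mono[of "{{v, c}}"] by fastforce
    then have "fc_step X (cut_off P G) (del_vertex v (cut_off P G))"
      using v 3 by (intro fc_step_del_vertex) auto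
    moreover have "del_vertex v (cut_off P G) = cut_off P (suppress_vertex v a b G)"
      unfolding cut_off_def del_vertex_def suppress_vertex_def using 3 v(3) by auto
    ultimately show ?thesis by simp
  qed
qed

lemma fc_step_cut_off:
  assumes "fc_step X G G'" "pendant_region X P G"
  shows "pendant_region X P G' \<and> (cut_off P G' = cut_off P G \<or> fc_step X (cut_off P G) (cut_off P G'))"
  using assms(1)
proof (cases rule: fc_stepE)
  case (del v)
  then show ?thesis
    using pendant_region_del_vertex[OF assms(2)] cut_off_del_vertex[OF assms(2) del(1-3)] by simp
next
  case (sup v a b)
  then show ?thesis
    using pendant_region_suppress_vertex[OF assms(2) sup(1,4,5)] cut_off_suppress_vertex[OF assms(2) sup(1-5)]
    by simp
qed

lemma fc_steps_cut_off:
  assumes "(fc_step X)\<^sup>*\<^sup>* G H" "pendant_region X P G"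
  shows "pendant_region X P H \<and> (fc_step X)\<^sup>*\<^sup>* (cut_off P G) (cut_off P H)"
  using assms(1)
proof (induction rule: rtranclp_induct)
  case (step y z)
  have "pendant_region X P z \<and> (cut_off P z = cut_off P y \<or> fc_step X (cut_off P y) (cut_off P z))"
    using fc_step_cut_off[OF step(2)] step(3) by blast
  then have "pendant_region X P z" "(fc_step X)\<^sup>*\<^sup>* (cut_off P y) (cut_off P z)" by auto
  then show ?case using step(3) by (auto intro: rtranclp_trans)
qed (use assms(2) in simp)

text \<open>Double counting: in an irreducible graph every region vertex has degree at least two, while
  the region spans fewer edges than vertices and only one edge leaves it.\<close>

lemma irreducible_pendant_region_empty:
  assumes pend: "pendant_region X P H" and irred: "\<not> (\<exists>H'. fc_step X H H')"
  shows "gV H \<inter> P = {}"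
proof (rule ccontr)
  assume ne: "gV H \<inter> P \<noteq> {}"
  define S where "S = gV H \<inter> P"
  note H = pendant_regionD[OF pend]
  have edges: "edges_in (gV H) (gE H)" and finV: "finite (gV H)" using H(1) unfolding wf_graph_def by auto
  have finE: "finite (gE H)" using wf_graph_finite_edges[OF H(1)] .
  have finS: "finite S" using finV unfolding S_def by simp
  have deg2: "2 \<le> deg (gE H) v" if "v \<in> S" for v
  proof (rule ccontr)
    assume "\<not> 2 \<le> deg (gE H) v"
    moreover have "v \<in> gV H" "v \<notin> glab H ` X" using that H(2) unfolding S_def by auto
    ultimately have "fc_step X H (del_vertex v H)" by (intro fc_step_del_vertex) auto
    then show False using irred by blast
  qed
  have "2 * card S = (\<Sum>v\<in>S. 2)" by simp
  also have "\<dots> \<le> (\<Sum>v\<in>S. deg (gE H) v)" using deg2 by (rule sum_mono)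
  also have "\<dots> = (\<Sum>f\<in>gE H. card (f \<inter> S))" using finE finS by (rule sum_deg)
  also have "\<dots> \<le> (\<Sum>f\<in>gE H. (if f \<subseteq> S then 2 else 0) + (if crosses P f then 1 else 0))"
  proof (rule sum_mono)
    fix f assume "f \<in> gE H"
    with edges obtain u w where "u \<in> gV H" "w \<in> gV H" "u \<noteq> w" "f = {u, w}" by (rule edges_inE)
    moreover have "card (f \<inter> S) = (if u \<in> S then 1 else 0) + (if w \<in> S then 1 else 0)"
      using card_doubleton_Int[OF \<open>u \<noteq> w\<close>] \<open>f = {u, w}\<close> by simp
    ultimately show "card (f \<inter> S) \<le> (if f \<subseteq> S then 2 else 0) + (if crosses P f then 1 else 0)"
      unfolding S_def crosses_def by auto
  qed
  also have "\<dots> = 2 * card {f\<in>gE H. f \<subseteq> S} + card {f\<in>gE H. crosses P f}"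
    using sum.inter_filter[OF finE, of "\<lambda>_. 2::nat" "\<lambda>f. f \<subseteq> S"]
      sum.inter_filter[OF finE, of "\<lambda>_. 1::nat" "crosses P"]
    by (simp add: sum.distrib)
  finally have count: "2 * card S \<le> 2 * card {f\<in>gE H. f \<subseteq> S} + card {f\<in>gE H. crosses P f}" .
  have "card {f\<in>gE H. crosses P f} \<le> Suc 0"
    using finE H(3) by (subst card_le_Suc0_iff_eq) auto
  moreover have "card {f\<in>gE H. f \<subseteq> S} < card S"
    using forest_onD[OF H(4), of S] ne unfolding S_def by (simp add: Int_commute)
  ultimately show False using count by linarith
qed

lemma cut_off_disjoint:
  assumes "wf_graph H" "gV H \<inter> P = {}"
  shows "cut_off P H = H"
proof -
  have "f \<inter> P = {}" if "f \<in> gE H" for f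
    using that assms unfolding wf_graph_def by (auto elim: edges_inE)
  then show ?thesis unfolding cut_off_def using assms(2) by (cases H) auto
qed

lemma fully_contracted_cut_off:
  assumes "fully_contracted X G H" "pendant_region X P G"
  shows "fully_contracted X (cut_off P G) H"
proof -
  have steps: "(fc_step X)\<^sup>*\<^sup>* G H" and irred: "\<not> (\<exists>H'. fc_step X H H')"
    using assms(1) unfolding fully_contracted_def by auto
  have H: "pendant_region X P H" and cut: "(fc_step X)\<^sup>*\<^sup>* (cut_off P G) (cut_off P H)"
    using fc_steps_cut_off[OF steps assms(2)] by auto
  have "cut_off P H = H"
    using cut_off_disjoint pendant_regionD(1)[OF H] irreducible_pendant_region_empty[OF H irred] by blast
  then show ?thesis using cut irred unfolding fully_contracted_def by simp
qed

lemma fc_steps_delete_isolated: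
  assumes "finite S" "S \<subseteq> gV G" "\<forall>x\<in>X. glab G x \<notin> S" "\<forall>f\<in>gE G. f \<inter> S = {}"
  shows "(fc_step X)\<^sup>*\<^sup>* G \<lparr>gV = gV G - S, gE = gE G, glab = glab G, gR = gR G - S\<rparr>"
  using assms
proof (induction S rule: finite_induct)
  case empty
  then show ?case by (cases G) simp
next
  case (insert v S)
  let ?G = "\<lparr>gV = gV G - S, gE = gE G, glab = glab G, gR = gR G - S\<rparr>"
  have IH: "(fc_step X)\<^sup>*\<^sup>* G ?G" by (rule insert.IH) (use insert.prems in auto)
  have no_edge: "{f\<in>gE G. v \<in> f} = {}" using insert.prems(3) by auto
  then have "deg (gE ?G) v = 0" unfolding deg_def by (simp only: lgraph.select_convs card.empty)
  then have "fc_step X ?G (del_vertex v ?G)"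
    using insert.hyps(2) insert.prems(1,2) by (intro fc_step_del_vertex) auto
  with IH have "(fc_step X)\<^sup>*\<^sup>* G (del_vertex v ?G)" by (rule rtranclp.rtrancl_into_rtrancl)
  moreover have "del_vertex v ?G =
      \<lparr>gV = gV G - insert v S, gE = gE G, glab = glab G, gR = gR G - insert v S\<rparr>"
    unfolding del_vertex_def using no_edge by auto
  ultimately show ?case by simp
qed

section \<open>Forests\<close>

lemma to_graph_simps [simp]:
  "gV (to_graph rt rho X F) = fW F" "gE (to_graph rt rho X F) = fA F"
  "glab (to_graph rt rho X F) = tlab (ftree F)" "gR (to_graph rt rho X F) = (if rt then croots X rho F else {})"
  by (simp_all add: to_graph_def)

lemma del_edges_simps [simp]:
  "ftree (del_edges F D) = ftree F" "fW (del_edges F D) = fW F" "fA (del_edges F D) = fA F - D"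
  by (simp_all add: del_edges_def)

lemma del_edges_del_edges: "del_edges (del_edges F A) B = del_edges F (A \<union> B)"
  by (simp add: del_edges_def Diff_eq Int_assoc)

lemma del_edges_empty: "del_edges F {} = F"
  by (simp add: del_edges_def)

lemma is_xtree_tree_graph: "is_xtree rt rho X T \<Longrightarrow> tree_graph (tV T) (tE T)"
  unfolding is_xtree_def tree_graph_def edges_in_def by (elim conjE) (intro conjI; assumption)

lemma is_xforestD:
  assumes "is_xforest rt rho X F"
  shows "tree_graph (tV (ftree F)) (tE (ftree F))" "fW F \<subseteq> tV (ftree F)" "fA F \<subseteq> tE (ftree F)"
    "f \<in> fA F \<Longrightarrow> f \<subseteq> fW F" "tlab (ftree F) ` X \<subseteq> fW F"
  using assms is_xtree_tree_graph unfolding is_xforest_def by auto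

lemma is_xforest_finite:
  assumes "is_xforest rt rho X F"
  shows "finite (fW F)"
  using is_xforestD(2)[OF assms] by (rule finite_subset)
    (use is_xforestD(1)[OF assms] in \<open>simp add: tree_graph_def\<close>)

lemma is_xforest_edges_in:
  assumes "is_xforest rt rho X F"
  shows "edges_in (fW F) (fA F)"
  unfolding edges_in_def
proof
  note F = is_xforestD[OF assms]
  fix f assume f: "f \<in> fA F"
  have "edges_in (tV (ftree F)) (tE (ftree F))" using F(1) unfolding tree_graph_def by blast
  then obtain u w where "u \<noteq> w" "f = {u, w}" using f F(3) by (blast elim: edges_inE)
  then show "\<exists>u w. u \<in> fW F \<and> w \<in> fW F \<and> u \<noteq> w \<and> f = {u, w}" using F(4)[OF f] by blast
qed

lemma wf_graph_to_graph_del_edges: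
  "is_xforest rt rho X F \<Longrightarrow> wf_graph (to_graph rt rho X (del_edges F D))"
  using is_xforest_finite edges_in_subset[OF is_xforest_edges_in, of _ _ _ F "fA F - D"]
  unfolding wf_graph_def by auto

lemma subforest_label_reach_iff:
  assumes "is_xforest rt rho X F'" "is_xforest rt rho X F"
    "fequiv X (to_graph rt rho X F') (to_graph rt rho X (del_edges F D))" "x \<in> X" "y \<in> X"
  shows "reach (fA F') (tlab (ftree F') x) (tlab (ftree F') y) \<longleftrightarrow>
    reach (fA F - D) (tlab (ftree F) x) (tlab (ftree F) y)"
  using fequiv_label_reach_iff[OF assms(3) _ wf_graph_to_graph_del_edges[OF assms(2)] _ _ assms(4,5)]
    wf_graph_to_graph_del_edges[OF assms(1), of "{}"] is_xforestD(5)[OF assms(1)] is_xforestD(5)[OF assms(2)]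
  by (simp add: del_edges_empty)

lemma label_reach_comp_labels:
  assumes "is_xforest rt rho X F" "C \<in> comp_labels X F" "x \<in> C" "y \<in> X"
    "reach (fA F) (tlab (ftree F) x) (tlab (ftree F) y)"
  shows "y \<in> C"
proof -
  obtain w where C: "C = {z\<in>X. tlab (ftree F) z \<in> {u \<in> fW F. reach (fA F) w u}}"
    using assms(2) unfolding comp_labels_def comps_def by blast
  have "reach (fA F) w (tlab (ftree F) y)" using assms(3,5) C by (auto intro: reach_trans)
  then show ?thesis using C assms(4) is_xforestD(5)[OF assms(1)] by auto
qed

lemma comps_label_classes:
  assumes "L \<subseteq> W"
  shows "{C \<inter> L | C. C \<in> comps W A \<and> C \<inter> L \<noteq> {}} = {{l'\<in>L. reach A l l'} | l. l \<in> L}"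
proof (intro equalityI subsetI)
  fix Z assume "Z \<in> {C \<inter> L | C. C \<in> comps W A \<and> C \<inter> L \<noteq> {}}"
  then obtain w l where Z: "Z = {u \<in> W. reach A w u} \<inter> L" and l: "l \<in> L" "reach A w l"
    unfolding comps_def by blast
  have "Z = {l'\<in>L. reach A l l'}"
    using Z l assms by (blast intro: reach_trans reach_sym)
  then show "Z \<in> {{l'\<in>L. reach A l l'} | l. l \<in> L}" using l(1) by blast
next
  fix Z assume "Z \<in> {{l'\<in>L. reach A l l'} | l. l \<in> L}"
  then obtain l where Z: "Z = {l'\<in>L. reach A l l'}" and l: "l \<in> L" by blast
  have "{u \<in> W. reach A l u} \<in> comps W A" unfolding comps_def using l assms by blast
  moreover have "{u \<in> W. reach A l u} \<inter> L = Z" "l \<in> {u \<in> W. reach A l u} \<inter> L"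
    using Z l assms by auto
  ultimately show "Z \<in> {C \<inter> L | C. C \<in> comps W A \<and> C \<inter> L \<noteq> {}}" by blast
qed

lemma croots_cong:
  assumes "ftree F' = ftree F" "fW F' = fW F" "tlab (ftree F) ` X \<subseteq> fW F"
    "\<And>l l'. l \<in> tlab (ftree F) ` X \<Longrightarrow> l' \<in> tlab (ftree F) ` X \<Longrightarrow> reach (fA F') l l' \<longleftrightarrow> reach (fA F) l l'"
  shows "croots X rho F' = croots X rho F"
proof -
  let ?L = "tlab (ftree F) ` X"
  have classes: "croots X rho G = lca (ftree F) rho ` {{l'\<in>?L. reach (fA G) l l'} | l. l \<in> ?L}"
    if "ftree G = ftree F" "fW G = fW F" for G
  proof -
    have "croots X rho G = lca (ftree F) rho ` {C \<inter> ?L | C. C \<in> comps (fW F) (fA G) \<and> C \<inter> ?L \<noteq> {}}"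
      unfolding croots_def that by blast
    then show ?thesis by (simp only: comps_label_classes[OF assms(3)])
  qed
  have "{{l'\<in>?L. reach (fA F') l l'} | l. l \<in> ?L} = {{l'\<in>?L. reach (fA F) l l'} | l. l \<in> ?L}"
    using assms(4) by blast
  then show ?thesis using classes[OF assms(1,2)] classes[of F] by simp
qed

lemma reach_class_not_crosses:
  assumes "{u, w} \<in> E" "u \<in> W" "w \<in> W"
  shows "\<not> crosses {v\<in>W. reach E c v} {u, w}"
proof -
  have "reach E c w" if "reach E c u" using reach_step[OF that assms(1)] .
  moreover have "reach E c u" if "reach E c w"
    using reach_step[OF that, of u] assms(1) by (simp add: insert_commute)
  ultimately show ?thesis using assms(2,3) unfolding crosses_def by auto
qed

lemma reach_avoid_region:
  assumes "reach A u w" "u \<notin> P" "w \<notin> P" "c \<in> P" "\<And>f. f \<in> A \<Longrightarrow> crosses P f \<Longrightarrow> f = {c, c'}"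
  shows "reach {f\<in>A. f \<inter> P = {}} u w"
proof -
  let ?A = "{f\<in>A. f \<inter> P = {}}"
  have "reach ?A u (if w \<in> P then c' else w)"
    using assms(1)
  proof (induction rule: reach_induct)
    case refl then show ?case using assms(2) by simp
  next
    case (step y x)
    consider "y \<in> P" "x \<in> P" | "crosses P {y, x}" | "y \<notin> P" "x \<notin> P"
      unfolding crosses_def by auto
    then show ?case
    proof cases
      case 1 then show ?thesis using step(3) by simp
    next
      case 2
      then have "{y, x} = {c, c'}" using assms(5) step(2) by blast
      then show ?thesis using step(3) 2 assms(4) unfolding crosses_def by (auto simp: doubleton_eq_iff)
    next
      case 3
      then have "{y, x} \<in> ?A" using step(2) by auto
      then show ?thesis using reach_step[of ?A u y x] step(3) 3 by simp
    qed
  qed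
  then show ?thesis using assms(3) by simp
qed

definition side :: "('v, 'x) xfor \<Rightarrow> 'v set set \<Rightarrow> 'v set \<Rightarrow> 'v \<Rightarrow> 'v set" where
  "side F D e c = {v \<in> fW F. reach (fA F - D - {e}) c v}"

lemma crosses_side:
  assumes "is_xforest rt rho X F" "f \<in> fA F - D" "crosses (side F D e c) f"
  shows "f = e"
proof (rule ccontr)
  assume "f \<noteq> e"
  obtain u w where "u \<in> fW F" "w \<in> fW F" "f = {u, w}"
    using is_xforest_edges_in[OF assms(1)] assms(2) by (blast elim: edges_inE)
  then show False using reach_class_not_crosses[of u w "fA F - D - {e}"] assms(2,3) \<open>f \<noteq> e\<close>
    unfolding side_def by simp
qed

lemma pendant_region_side:
  assumes F: "is_xforest rt rho X F" and unlabelled: "\<forall>x\<in>X. tlab (ftree F) x \<notin> side F D e c"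
  shows "pendant_region X (side F D e c) (to_graph rt rho X (del_edges F D))"
proof -
  note Fd = is_xforestD[OF F]
  have "forest_on (tE (ftree F)) (tV (ftree F))" using Fd(1) by (rule tree_graph_forest_on)
  then have "forest_on (fA F - D) (side F D e c \<inter> fW F)"
    using Fd(1-3) edges_in_finite unfolding tree_graph_def by (elim forest_on_mono) auto
  moreover have "\<forall>f\<in>fA F - D. \<forall>g\<in>fA F - D. crosses (side F D e c) f \<longrightarrow> crosses (side F D e c) g \<longrightarrow> f = g"
    using crosses_side[OF F] by blast
  ultimately show ?thesis
    unfolding pendant_region_def using wf_graph_to_graph_del_edges[OF F] unlabelled by simp
qed

text \<open>Forced contraction erases an unlabelled side of \<open>e\<close> by itself, so deleting the edges at
  that side beforehand does not change the result.\<close>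

lemma fully_contracted_del_side:
  assumes F: "is_xforest rt rho X F" and e: "e \<in> fA F" "e = {c, c'}"
    and unlabelled: "\<forall>x\<in>X. tlab (ftree F) x \<notin> side F D e c"
    and H: "fully_contracted X (to_graph rt rho X (del_edges F D)) H"
  shows "fully_contracted X (to_graph rt rho X (del_edges F (D \<union> {f. f \<inter> side F D e c \<noteq> {}}))) H"
proof -
  define P where "P = side F D e c"
  define D' where "D' = D \<union> {f. f \<inter> P \<noteq> {}}"
  define G0 where "G0 = to_graph rt rho X (del_edges F D)"
  define G1 where "G1 = to_graph rt rho X (del_edges F D')"
  have PW: "P \<subseteq> fW F" unfolding P_def side_def by blast
  have cP: "c \<in> P" using is_xforestD(4)[OF F e(1)] e(2) unfolding P_def side_def by simp
  have no_label: "l \<notin> P" if "l \<in> tlab (ftree F) ` X" for l using unlabelled that unfolding P_def by blast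
  have cut: "fully_contracted X (cut_off P G0) H"
    using H pendant_region_side[OF F unlabelled] unfolding G0_def P_def by (rule fully_contracted_cut_off)
  have AD': "fA F - D' = {f\<in>fA F - D. f \<inter> P = {}}" unfolding D'_def by auto
  have label_reach: "reach (fA F - D') l l' \<longleftrightarrow> reach (fA F - D) l l'"
    if "l \<in> tlab (ftree F) ` X" "l' \<in> tlab (ftree F) ` X" for l l'
  proof
    assume "reach (fA F - D') l l'"
    then show "reach (fA F - D) l l'" by (rule reach_mono) (auto simp: D'_def)
  next
    have crossing: "f = {c, c'}" if "f \<in> fA F - D" "crosses P f" for f
      using crosses_side[OF F that(1)] that(2) e(2) unfolding P_def by simp
    assume "reach (fA F - D) l l'"
    then show "reach (fA F - D') l l'"
      unfolding AD' using no_label that cP crossing by (intro reach_avoid_region) auto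
  qed
  have roots: "croots X rho (del_edges F D') = croots X rho (del_edges F D)"
    by (rule croots_cong) (simp_all add: is_xforestD(5)[OF F] label_reach)
  have "finite P" using is_xforest_finite[OF F] PW by (rule finite_subset[rotated])
  then have "(fc_step X)\<^sup>*\<^sup>* G1 \<lparr>gV = gV G1 - P, gE = gE G1, glab = glab G1, gR = gR G1 - P\<rparr>"
    using PW no_label AD' unfolding G1_def by (intro fc_steps_delete_isolated) auto
  also have "\<lparr>gV = gV G1 - P, gE = gE G1, glab = glab G1, gR = gR G1 - P\<rparr> = cut_off P G0"
    unfolding G0_def G1_def cut_off_def using AD' roots PW by auto
  finally show ?thesis using cut unfolding G1_def D'_def P_def fully_contracted_def by auto
qed

text \<open>Two labels on different sides of \<open>e\<close> are joined in \<open>F\<^sub>q\<close>, hence in every agreement forest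
  and so in \<open>F\<^sub>p\<close>; but the sides of \<open>e\<close> separate the labels of the components \<open>Cs\<close> of \<open>F\<^sub>p\<close>.\<close>

lemma separating_edge_unlabelled_side:
  assumes Fq: "is_xforest rt rho X Fq" and Fp: "is_xforest rt rho X Fp" and F: "is_xforest rt rho X F"
    and subp: "subforest rt rho X F Fp"
    and Dq: "fequiv X (to_graph rt rho X F) (to_graph rt rho X (del_edges Fq D))"
    and e: "e \<in> fA Fq - D" "e = {a, b}"
    and Cs: "Cs \<subseteq> comp_labels X Fp"
    and sa: "side_labels X Fq e a \<subseteq> \<Union>Cs" and sb: "side_labels X Fq e b \<inter> \<Union>Cs = {}"
  shows "(\<forall>x\<in>X. tlab (ftree Fq) x \<notin> side Fq D e a) \<or> (\<forall>x\<in>X. tlab (ftree Fq) x \<notin> side Fq D e b)"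
proof (rule ccontr)
  let ?E = "fA Fq - D - {e}" and ?lq = "tlab (ftree Fq)"
  assume "\<not> ?thesis"
  then obtain x y where x: "x \<in> X" "reach ?E a (?lq x)" and y: "y \<in> X" "reach ?E b (?lq y)"
    unfolding side_def by blast
  have "reach (fA Fq - D) (?lq x) a" using reach_sym[OF reach_mono[OF x(2)]] by blast
  then have "reach (fA Fq - D) (?lq x) b" using e by (auto intro: reach_step)
  moreover have "reach (fA Fq - D) b (?lq y)" using reach_mono[OF y(2)] by blast
  ultimately have "reach (fA Fq - D) (?lq x) (?lq y)" by (rule reach_trans)
  then have "reach (fA F) (tlab (ftree F) x) (tlab (ftree F) y)"
    using subforest_label_reach_iff[OF F Fq Dq x(1) y(1)] by simp
  moreover obtain Dp where "fequiv X (to_graph rt rho X F) (to_graph rt rho X (del_edges Fp Dp))"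
    using subp unfolding subforest_def by blast
  ultimately have "reach (fA Fp - Dp) (tlab (ftree Fp) x) (tlab (ftree Fp) y)"
    using subforest_label_reach_iff[OF F Fp _ x(1) y(1)] by simp
  then have rp: "reach (fA Fp) (tlab (ftree Fp) x) (tlab (ftree Fp) y)" by (rule reach_mono) blast
  have "reach (fA Fq - {e}) a (?lq x)" "reach (fA Fq - {e}) b (?lq y)"
    using reach_mono[OF x(2)] reach_mono[OF y(2)] by blast+
  then have "x \<in> side_labels X Fq e a" "y \<in> side_labels X Fq e b"
    unfolding side_labels_def using x(1) y(1) by auto
  then obtain C where "C \<in> Cs" "x \<in> C" "y \<notin> C" using sa sb by blast
  then show False using label_reach_comp_labels[OF Fp _ _ y(1) rp] Cs by blast
qed

lemma subforest_del_separating_edge: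
  assumes Fq: "is_xforest rt rho X Fq" and Fp: "is_xforest rt rho X Fp" and F: "is_xforest rt rho X F"
    and subp: "subforest rt rho X F Fp" and subq: "subforest rt rho X F Fq"
    and e: "e \<in> fA Fq" "e = {a, b}"
    and Cs: "Cs \<subseteq> comp_labels X Fp"
    and sa: "side_labels X Fq e a \<subseteq> \<Union>Cs" and sb: "side_labels X Fq e b \<inter> \<Union>Cs = {}"
  shows "subforest rt rho X F (del_edges Fq {e})"
proof -
  obtain D where D: "fequiv X (to_graph rt rho X F) (to_graph rt rho X (del_edges Fq D))"
    using subq unfolding subforest_def by blast
  then obtain G' H where G': "fully_contracted X (to_graph rt rho X F) G'"
    and H: "fully_contracted X (to_graph rt rho X (del_edges Fq D)) H" and iso: "lg_iso X G' H"
    unfolding fequiv_def by blast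
  have via: "subforest rt rho X F (del_edges Fq {e})"
    if "e \<in> D'" "fully_contracted X (to_graph rt rho X (del_edges Fq D')) H" for D'
  proof -
    have "fequiv X (to_graph rt rho X F) (to_graph rt rho X (del_edges Fq D'))"
      unfolding fequiv_def using G' that(2) iso by blast
    moreover have "del_edges (del_edges Fq {e}) D' = del_edges Fq D'"
      using that(1) by (simp add: del_edges_del_edges insert_absorb)
    ultimately show ?thesis unfolding subforest_def by (intro exI[of _ D']) simp
  qed
  have del_side: "subforest rt rho X F (del_edges Fq {e})"
    if "e = {c, c'}" "\<forall>x\<in>X. tlab (ftree Fq) x \<notin> side Fq D e c" for c c'
  proof (rule via)
    have "c \<in> side Fq D e c" using is_xforestD(4)[OF Fq e(1)] that(1) unfolding side_def by simp
    then show "e \<in> D \<union> {f. f \<inter> side Fq D e c \<noteq> {}}" using that(1) by blast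
  qed (rule fully_contracted_del_side[OF Fq e(1) that H])
  show ?thesis
  proof (cases "e \<in> D")
    case True
    then show ?thesis using H by (rule via)
  next
    case False
    then have "(\<forall>x\<in>X. tlab (ftree Fq) x \<notin> side Fq D e a) \<or> (\<forall>x\<in>X. tlab (ftree Fq) x \<notin> side Fq D e b)"
      using separating_edge_unlabelled_side[OF Fq Fp F subp D _ e(2) Cs sa sb] e(1) by blast
    then show ?thesis using del_side e(2) by (metis insert_commute)
  qed
qed

lemma subforest_of_del_edges:
  "subforest rt rho X F (del_edges G A) \<Longrightarrow> subforest rt rho X F G"
  unfolding subforest_def del_edges_del_edges by blast

lemma agreement_forest_del_separating_edge_iff:
  assumes forests: "\<forall>i \<in> {1..m}. is_xforest rt rho X (Fs i)"
    and pq: "p \<in> {1..m}" "q \<in> {1..m}"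
    and Cs: "Cs \<subseteq> comp_labels X (Fs p)" and e: "e \<in> fA (Fs q)" "e = {a, b}"
    and sa: "side_labels X (Fs q) e a \<subseteq> \<Union>Cs" and sb: "side_labels X (Fs q) e b \<inter> \<Union>Cs = {}"
  shows "agreement_forest rt rho X m (Fs(q := del_edges (Fs q) {e})) F \<longleftrightarrow> agreement_forest rt rho X m Fs F"
proof
  assume "agreement_forest rt rho X m (Fs(q := del_edges (Fs q) {e})) F"
  then show "agreement_forest rt rho X m Fs F"
    unfolding agreement_forest_def by (metis fun_upd_apply subforest_of_del_edges)
next
  assume "agreement_forest rt rho X m Fs F"
  then have F: "is_xforest rt rho X F" and sub: "\<And>i. i \<in> {1..m} \<Longrightarrow> subforest rt rho X F (Fs i)"
    unfolding agreement_forest_def by blast+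
  have "subforest rt rho X F (del_edges (Fs q) {e})"
    using forests pq sub
    by (intro subforest_del_separating_edge[OF _ _ F _ _ e Cs sa sb]) blast+
  then show "agreement_forest rt rho X m (Fs(q := del_edges (Fs q) {e})) F"
    unfolding agreement_forest_def using F sub by simp
qed

theorem lemma3p1:
  fixes X :: "'x set" and rho :: 'x and rt :: bool and m p q :: nat
    and Fs :: "nat \<Rightarrow> ('v, 'x) xfor" and Cs :: "'x set set" and e :: "'v set" and a b :: 'v
  assumes "finite X"
    and "2 \<le> m"
    and "\<forall>i \<in> {1..m}. is_xforest rt rho X (Fs i)"
    and "p \<in> {1..m}" and "q \<in> {1..m}" and "q \<noteq> p"
    and "Cs \<noteq> {}" and "Cs \<subseteq> comp_labels X (Fs p)"
    and "e \<in> fA (Fs q)" and "e = {a, b}" and "a \<noteq> b"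
    and "side_labels X (Fs q) e a \<subseteq> \<Union>Cs"
    and "side_labels X (Fs q) e b \<inter> \<Union>Cs = {}"
  shows "\<forall>F. max_agreement_forest rt rho X m (Fs(q := del_edges (Fs q) {e})) F
           \<longleftrightarrow> max_agreement_forest rt rho X m Fs F"
  using agreement_forest_del_separating_edge_iff[OF assms(3,4,5,8,9,10,12,13)]
  unfolding max_agreement_forest_def by simp

end
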